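(* Let $n\ge2$, let $T_1,\dots,T_n$ be distinct triangles in $E$, and let $S$ be the set of vertices of $\bigcap_{i=1}^nT_i$. There exists $\epsilon_0>0$ such that for every $0<\epsilon<\epsilon_0$, letting $P$ be the convex hull of all vertices of $T_1^{(1-\epsilon)},\dots,T_n^{(1-\epsilon)}$, for every $S'\subseteq S$ with $|S'|<n$ the pair $(P,S')$ is a YES instance of the intermediate polygon problem, i.e. there is a triangle $T$ with $S'\subseteq T\subseteq P$.
   Context: For $d>0$ let $C_d=\{(x,y)\in\mathbb{R}^2: x^2+y^2\le d\}$, and $C=C_1$. $E$ is the set of all equilateral triangles $T\subseteq C$ whose vertices lie on the boundary of $C$. For $T\in E$, $T^{(1-\epsilon)}$ denotes the scaling of $T$ about the origin such that the vertices of $T^{(1-\epsilon)}$ lie on the boundary of $C_{1-\epsilon}$. An instance of the intermediate polygon problem is a polygon $P\subseteq\mathbb{R}^2$ and a finite point set; it is a YES instance if some triangle $T$ satisfies (point set) $\subseteq T\subseteq P$. *)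

theory Defs
  imports "HOL-Analysis.Analysis"
begin

text \<open>The plane R^2 is modelled as the complex numbers.
  C_d = {z. |z|^2 <= d}, a disk of radius sqrt d.\<close>

definition disk :: "real \<Rightarrow> complex set" where
  "disk d = {z. (Re z)^2 + (Im z)^2 \<le> d}"

definition CC :: "complex set" where
  "CC = disk 1"

definition is_triangle :: "complex set \<Rightarrow> bool" where
  "is_triangle T \<longleftrightarrow> (\<exists>a b c. \<not> collinear {a, b, c} \<and> T = convex hull {a, b, c})"

definition EE :: "complex set set" where
  "EE = {T. T \<subseteq> CC \<and> (\<exists>a b c. a \<in> frontier CC \<and> b \<in> frontier CC \<and> c \<in> frontier CC \<and>
            a \<noteq> b \<and> dist a b = dist b c \<and> dist b c = dist c a \<and>
            T = convex hull {a, b, c})}"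

definition vertices :: "complex set \<Rightarrow> complex set" where
  "vertices K = {v. v extreme_point_of K}"

text \<open>T^(1-eps): scaling of T about the origin so that its vertices lie on the
  boundary of C_(1-eps), i.e. scaling by the factor sqrt (1 - eps).\<close>
definition shrink :: "real \<Rightarrow> complex set \<Rightarrow> complex set" where
  "shrink eps T = (\<lambda>z. complex_of_real (sqrt (1 - eps)) * z) ` T"

definition ipp_yes :: "complex set \<Rightarrow> complex set \<Rightarrow> bool" where
  "ipp_yes P Q \<longleftrightarrow> (\<exists>T. is_triangle T \<and> Q \<subseteq> T \<and> T \<subseteq> P)"

end

theory Submission
  imports Defs
begin

text \<open>Every triangle in \<open>E\<close> is \<open>{A, A\<omega>, A\<omega>\<^sup>2}\<close> for a unit complex number \<open>A\<close>, and distinct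
  triangles share no vertex. The edge lines through a point \<open>z\<close> are \<open>{w. w \<bullet> V = -1/2}\<close> for
  the unit vectors \<open>V\<close> with \<open>z \<bullet> V = -1/2\<close>; there are at most two such \<open>V\<close>, so \<open>z\<close> lies on
  the boundary of at most two of the \<open>T\<^sub>i\<close>. Since \<open>|S'| < n\<close>, some \<open>T\<^sub>i\<close> has at most one point
  of \<open>S'\<close> on its boundary, and that point is not a vertex (a point of the circle lying in
  \<open>T\<^sub>j\<close> is a vertex of \<open>T\<^sub>j\<close>). Some vertex \<open>X\<close> of another \<open>T\<^sub>j\<close> lies strictly beyond the
  edge line through this point; moving an endpoint of that edge slightly towards \<open>X\<close> gives a
  triangle inside the convex hull of the \<open>T\<^sub>k\<close> with all of \<open>S'\<close> in its interior. As
  \<open>\<epsilon> \<rightarrow> 0\<close> the shrinking factor tends to \<open>1\<close>, so the shrunk triangle still contains \<open>S'\<close>,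
  and it lies in \<open>P\<close>, the shrunk convex hull of the \<open>T\<^sub>k\<close>.\<close>

definition \<omega> :: complex where "\<omega> = Complex (-1/2) (sqrt 3 / 2)"
definition \<omega>\<^sub>2 :: complex where "\<omega>\<^sub>2 = Complex (-1/2) (- sqrt 3 / 2)"

definition eq_vertices :: "complex \<Rightarrow> complex set" where
  "eq_vertices A = {A, A * \<omega>, A * \<omega>\<^sub>2}"

definition eq_triangle :: "complex \<Rightarrow> complex set" where
  "eq_triangle A = convex hull (eq_vertices A)"

text \<open>For a unit vector \<open>V\<close>, \<open>bary z V\<close> is the barycentric coordinate of \<open>z\<close> at the vertex \<open>V\<close>
  of the inscribed equilateral triangle \<open>eq_triangle V\<close>; it vanishes on the opposite edge line.\<close>

definition bary :: "complex \<Rightarrow> complex \<Rightarrow> real" where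
  "bary z V = (1 + 2 * (z \<bullet> V)) / 3"

lemma \<omega>_mult_\<omega>: "\<omega> * \<omega> = \<omega>\<^sub>2" and \<omega>_mult_\<omega>\<^sub>2: "\<omega> * \<omega>\<^sub>2 = 1" and \<omega>\<^sub>2_mult_\<omega>\<^sub>2: "\<omega>\<^sub>2 * \<omega>\<^sub>2 = \<omega>"
  and sum_cube_roots_of_unity: "1 + \<omega> + \<omega>\<^sub>2 = 0"
  by (simp_all add: \<omega>_def \<omega>\<^sub>2_def complex_eq_iff)

lemma norm_\<omega> [simp]: "norm \<omega> = 1" and norm_\<omega>\<^sub>2 [simp]: "norm \<omega>\<^sub>2 = 1"
  by (simp_all add: \<omega>_def \<omega>\<^sub>2_def cmod_def power_divide)

lemma unit_Re_Im: "norm (A::complex) = 1 \<Longrightarrow> (Re A)^2 + (Im A)^2 = 1"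
  by (simp add: cmod_def)

lemma inner_eq_vertices:
  assumes "norm A = 1"
  shows "A \<bullet> A = 1" "A \<bullet> (A*\<omega>) = -1/2" "A \<bullet> (A*\<omega>\<^sub>2) = -1/2" "(A*\<omega>) \<bullet> (A*\<omega>\<^sub>2) = -1/2"
    "(A*\<omega>) \<bullet> (A*\<omega>) = 1" "(A*\<omega>\<^sub>2) \<bullet> (A*\<omega>\<^sub>2) = 1"
    "(A*\<omega>) \<bullet> A = -1/2" "(A*\<omega>\<^sub>2) \<bullet> A = -1/2" "(A*\<omega>\<^sub>2) \<bullet> (A*\<omega>) = -1/2"
  using unit_Re_Im[OF assms]
  by (simp_all add: inner_complex_def \<omega>_def \<omega>\<^sub>2_def algebra_simps power2_eq_square;
      simp add: power2_eq_square[symmetric])+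

lemma eq_vertices_sum: "A + A*\<omega> + A*\<omega>\<^sub>2 = 0"
  by (metis distrib_left mult.right_neutral mult_zero_right sum_cube_roots_of_unity)

lemma inner_eq_vertices_sum: "z \<bullet> A + z \<bullet> (A*\<omega>) + z \<bullet> (A*\<omega>\<^sub>2) = 0"
  by (metis inner_add_right inner_zero_right eq_vertices_sum)

lemma bary_eq_0_iff: "bary z V = 0 \<longleftrightarrow> z \<bullet> V = -1/2"
  unfolding bary_def by (simp add: field_simps) linarith

lemma bary_sum: "bary z A + bary z (A*\<omega>) + bary z (A*\<omega>\<^sub>2) = 1"
  using inner_eq_vertices_sum[of z A] by (simp add: bary_def field_simps)

lemma bary_decomposition:
  assumes "norm A = 1"
  shows "z = bary z A *\<^sub>R A + bary z (A*\<omega>) *\<^sub>R (A*\<omega>) + bary z (A*\<omega>\<^sub>2) *\<^sub>R (A*\<omega>\<^sub>2)"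
  using unit_Re_Im[OF assms]
  apply (simp add: complex_eq_iff bary_def inner_complex_def \<omega>_def \<omega>\<^sub>2_def algebra_simps)
  apply (simp add: field_simps)
  apply (rule conjI)
   apply algebra+
  done

lemma bary_unique:
  assumes "norm A = 1" "z = u *\<^sub>R A + v *\<^sub>R (A*\<omega>) + w *\<^sub>R (A*\<omega>\<^sub>2)" "u + v + w = 1"
  shows "bary z A = u" "bary z (A*\<omega>) = v" "bary z (A*\<omega>\<^sub>2) = w"
  using assms inner_eq_vertices[OF assms(1)]
  by (simp_all add: bary_def inner_add_left inner_scaleR_left field_simps)

lemma mem_eq_triangle_iff:
  assumes "norm A = 1"
  shows "z \<in> eq_triangle A \<longleftrightarrow> 0 \<le> bary z A \<and> 0 \<le> bary z (A*\<omega>) \<and> 0 \<le> bary z (A*\<omega>\<^sub>2)"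
proof
  assume "z \<in> eq_triangle A"
  then obtain u v w where "z = u *\<^sub>R A + v *\<^sub>R (A*\<omega>) + w *\<^sub>R (A*\<omega>\<^sub>2)" "u+v+w = 1" "0\<le>u" "0\<le>v" "0\<le>w"
    unfolding eq_triangle_def eq_vertices_def convex_hull_3 by blast
  with bary_unique[OF assms] show "0 \<le> bary z A \<and> 0 \<le> bary z (A*\<omega>) \<and> 0 \<le> bary z (A*\<omega>\<^sub>2)"
    by metis
next
  assume "0 \<le> bary z A \<and> 0 \<le> bary z (A*\<omega>) \<and> 0 \<le> bary z (A*\<omega>\<^sub>2)"
  then show "z \<in> eq_triangle A"
    unfolding eq_triangle_def eq_vertices_def convex_hull_3
    using bary_decomposition[OF assms, of z] bary_sum[of z A] by blast
qed

lemma bary_pos_if_not_vertex: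
  assumes "norm A = 1" "z \<in> eq_triangle A" "z \<notin> eq_vertices A" "bary z (A*\<omega>\<^sub>2) = 0"
  shows "0 < bary z A" "0 < bary z (A*\<omega>)"
proof -
  have z: "z = bary z A *\<^sub>R A + bary z (A*\<omega>) *\<^sub>R (A*\<omega>)" "bary z A + bary z (A*\<omega>) = 1"
    using bary_decomposition[OF assms(1), of z] bary_sum[of z A] assms(4) by simp_all
  have "bary z A \<noteq> 0" "bary z (A*\<omega>) \<noteq> 0"
    using z assms(3) by (auto simp: eq_vertices_def)
  then show "0 < bary z A" "0 < bary z (A*\<omega>)"
    using assms(2) mem_eq_triangle_iff[OF assms(1)] by auto
qed

lemma Im_edge_product:
  assumes "norm A = 1"
  shows "Im ((z - A) * cnj (A*\<omega>\<^sub>2 - A)) = - (3 * sqrt 3 / 2) * bary z (A*\<omega>)"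
  using unit_Re_Im[OF assms]
  apply (simp add: bary_def inner_complex_def \<omega>_def \<omega>\<^sub>2_def algebra_simps)
  apply algebra
  done

lemma eq_vertices_mult_\<omega>: "eq_vertices (A*\<omega>) = eq_vertices A"
  unfolding eq_vertices_def by (auto simp: mult.assoc \<omega>_mult_\<omega> \<omega>_mult_\<omega>\<^sub>2)

lemma eq_vertices_mult_\<omega>\<^sub>2: "eq_vertices (A*\<omega>\<^sub>2) = eq_vertices A"
  unfolding eq_vertices_def by (auto simp: mult.assoc \<omega>_mult_\<omega>\<^sub>2 \<omega>\<^sub>2_mult_\<omega>\<^sub>2 mult.commute[of \<omega>\<^sub>2 \<omega>])

lemma eq_vertices_eq_if_mem: "D \<in> eq_vertices A \<Longrightarrow> eq_vertices D = eq_vertices A"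
  using eq_vertices_mult_\<omega> eq_vertices_mult_\<omega>\<^sub>2 unfolding eq_vertices_def by auto

lemma eq_vertices_eq_if_common:
  assumes "V \<in> eq_vertices A" "V \<in> eq_vertices D"
  shows "eq_vertices A = eq_vertices D"
  using eq_vertices_eq_if_mem[OF assms(1)] eq_vertices_eq_if_mem[OF assms(2)] by simp

lemma norm_eq_vertices: "norm A = 1 \<Longrightarrow> V \<in> eq_vertices A \<Longrightarrow> norm V = 1"
  unfolding eq_vertices_def by (auto simp: norm_mult)

lemma unit_mem_eq_triangle_imp_vertex:
  assumes A: "norm A = 1" and z: "norm z = 1" "z \<in> eq_triangle A"
  shows "z \<in> eq_vertices A"
proof -
  define u v w where "u = bary z A" "v = bary z (A*\<omega>)" "w = bary z (A*\<omega>\<^sub>2)"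
  have nn: "0 \<le> u" "0 \<le> v" "0 \<le> w" using z(2) mem_eq_triangle_iff[OF A] unfolding u_v_w_def by auto
  have s: "u + v + w = 1" using bary_sum unfolding u_v_w_def by simp
  have d: "z = u *\<^sub>R A + v *\<^sub>R (A*\<omega>) + w *\<^sub>R (A*\<omega>\<^sub>2)" using bary_decomposition[OF A] unfolding u_v_w_def .
  have inner_bary: "z \<bullet> V = (3 * bary z V - 1) / 2" for V
    by (simp add: bary_def field_simps)
  have "z \<bullet> z = u * (z \<bullet> A) + v * (z \<bullet> (A*\<omega>)) + w * (z \<bullet> (A*\<omega>\<^sub>2))"
    by (subst (2) d) (simp add: inner_add_right)
  moreover have "z \<bullet> z = 1" using z(1) by (simp add: dot_square_norm)
  ultimately have "1 = u * ((3 * u - 1)/2) + v * ((3 * v - 1)/2) + w * ((3 * w - 1)/2)"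
    unfolding u_v_w_def inner_bary by simp
  then have "u * v + v * w + u * w = 0" using s by algebra
  then have "u * v = 0 \<and> v * w = 0 \<and> u * w = 0"
    using nn by (simp add: add_nonneg_eq_0_iff)
  then have "(u = 0 \<and> v = 0) \<or> (u = 0 \<and> w = 0) \<or> (v = 0 \<and> w = 0)"
    by auto
  then show ?thesis using d s unfolding eq_vertices_def by auto
qed

lemma three_unit_vectors_same_inner:
  fixes s u1 u2 u3 :: complex
  assumes "s \<noteq> 0" "norm u1 = 1" "norm u2 = 1" "norm u3 = 1"
    "s \<bullet> u1 = c" "s \<bullet> u2 = c" "s \<bullet> u3 = c"
  shows "u1 = u2 \<or> u1 = u3 \<or> u2 = u3"
proof -
  define p q where "p = Re s" "q = Im s"
  have pq: "p^2 + q^2 > 0" using assms(1) unfolding p_q_def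
    by (simp add: complex_eq_iff sum_power2_gt_zero_iff)
  \<comment> \<open>the coordinate of \<open>u\<close> along the line \<open>s \<bullet> u = c\<close>, determined up to sign\<close>
  define t where "t u = Im u * p - Re u * q" for u
  have t_sq: "(t u)^2 = p^2 + q^2 - c^2" if "norm u = 1" "s \<bullet> u = c" for u
  proof -
    have "(Re u)^2 + (Im u)^2 = 1" using unit_Re_Im[OF that(1)] .
    moreover have "p * Re u + q * Im u = c" using that(2) unfolding p_q_def inner_complex_def .
    moreover have "(p * Re u + q * Im u)^2 + (t u)^2 = ((Re u)^2 + (Im u)^2) * (p^2+q^2)"
      unfolding t_def by algebra
    ultimately show ?thesis by simp
  qed
  have t_inj: "u = u'" if "s \<bullet> u = c" "s \<bullet> u' = c" "t u = t u'" for u u'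
  proof -
    have e1: "p * (Re u - Re u') + q * (Im u - Im u') = 0"
      using that(1,2) unfolding p_q_def inner_complex_def by (simp add: algebra_simps)
    have e2: "p * (Im u - Im u') - q * (Re u - Re u') = 0"
      using that(3) unfolding t_def by (simp add: algebra_simps)
    have "(p^2+q^2) * (Re u - Re u') = p * (p * (Re u - Re u') + q * (Im u - Im u')) - q * (p * (Im u - Im u') - q * (Re u - Re u'))"
      "(p^2+q^2) * (Im u - Im u') = q * (p * (Re u - Re u') + q * (Im u - Im u')) + p * (p * (Im u - Im u') - q * (Re u - Re u'))"
      by algebra+
    then show ?thesis using e1 e2 pq by (auto simp: complex_eq_iff)
  qed
  have "(t u1)^2 = (t u2)^2" "(t u1)^2 = (t u3)^2" using t_sq assms by auto
  then have "t u1 = t u2 \<or> t u1 = t u3 \<or> t u2 = t u3"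
    by (metis power2_eq_iff)
  then show ?thesis using t_inj assms by metis
qed

lemma sum_square_inner_eq_vertices:
  assumes "norm E = 1" "norm C = 1"
  shows "(E \<bullet> C)^2 + ((E*\<omega>) \<bullet> C)^2 + ((E*\<omega>\<^sub>2) \<bullet> C)^2 = 3/2"
proof -
  have unit_identity: "(a*c+b*d)^2 + ((-(a/2) - b*t/2)*c + (a*t/2 - b/2)*d)^2
      + ((-(a/2) + b*t/2)*c + (-(a*t/2) - b/2)*d)^2 = 3/2"
    if "t*t = 3" "a^2+b^2 = 1" "c^2+d^2 = 1" for a b c d t :: real
  proof -
    have "(a*c+b*d)^2 + ((-(a/2) - b*t/2)*c + (a*t/2 - b/2)*d)^2
        + ((-(a/2) + b*t/2)*c + (-(a*t/2) - b/2)*d)^2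
       = 3/2 * ((a^2+b^2)*(c^2+d^2)) + (t*t - 3) * ((b*c - a*d)^2/2)"
      by (simp add: field_simps power2_eq_square; algebra)
    then show ?thesis using that by simp
  qed
  show ?thesis
    using unit_identity[OF _ unit_Re_Im[OF assms(1)] unit_Re_Im[OF assms(2)], of "sqrt 3"]
    by (simp add: inner_complex_def \<omega>_def \<omega>\<^sub>2_def algebra_simps)
qed

lemma balanced_triple_attains_lower_bound:
  fixes x y z :: real
  assumes "x + y + z = 0" "x^2 + y^2 + z^2 = 3/2" "x \<ge> -1/2" "y \<ge> -1/2" "z \<ge> -1/2"
  shows "x = -1/2 \<or> y = -1/2 \<or> z = -1/2"
proof (rule ccontr)
  assume "\<not> ?thesis"
  then have p: "x + 1/2 > 0" "y + 1/2 > 0" "z + 1/2 > 0" using assms by auto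
  have "(x+1/2)*(y+1/2) + (y+1/2)*(z+1/2) + (x+1/2)*(z+1/2) = ((x+y+z)^2 - (x^2+y^2+z^2))/2 + (x+y+z) + 3/4"
    by algebra
  also have "\<dots> = 0" by (simp only: assms(1) assms(2)) simp
  moreover have "0 < (x+1/2)*(y+1/2) + (y+1/2)*(z+1/2) + (x+1/2)*(z+1/2)"
    using mult_pos_pos[OF p(1) p(2)] mult_pos_pos[OF p(2) p(3)] mult_pos_pos[OF p(1) p(3)] by linarith
  ultimately show False by simp
qed

text \<open>The inner products of the vertices of \<open>E\<close> with a unit vector sum to \<open>0\<close> and their squares
  to \<open>3/2\<close>; if none were below \<open>-1/2\<close>, one would equal \<open>-1/2\<close>, and that vertex would also be a
  vertex of \<open>A\<close>.\<close>

lemma exists_vertex_beyond_edge: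
  assumes A: "norm A = 1" and E: "norm E = 1" and disj: "eq_vertices A \<inter> eq_vertices E = {}"
  shows "\<exists>X\<in>eq_vertices E. bary X (A*\<omega>\<^sub>2) < 0"
proof (rule ccontr)
  assume "\<not> ?thesis"
  then have ge: "\<forall>X\<in>eq_vertices E. X \<bullet> (A*\<omega>\<^sub>2) \<ge> -1/2" unfolding bary_def by force
  have C: "norm (A*\<omega>\<^sub>2) = 1" using A by (simp add: norm_mult)
  have sum0: "E \<bullet> (A*\<omega>\<^sub>2) + (E*\<omega>) \<bullet> (A*\<omega>\<^sub>2) + (E*\<omega>\<^sub>2) \<bullet> (A*\<omega>\<^sub>2) = 0"
    using inner_eq_vertices_sum[of "A*\<omega>\<^sub>2" E] by (simp add: inner_commute)
  obtain Y where Y: "Y \<in> eq_vertices E" "Y \<bullet> (A*\<omega>\<^sub>2) = -1/2"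
    using balanced_triple_attains_lower_bound[OF sum0 sum_square_inner_eq_vertices[OF E C]] ge
    unfolding eq_vertices_def by auto
  have "A = A*\<omega> \<or> A = Y \<or> A*\<omega> = Y"
    using A C norm_eq_vertices[OF E Y(1)] Y(2) inner_eq_vertices[OF A]
    by (intro three_unit_vectors_same_inner[of "A*\<omega>\<^sub>2" _ _ _ "-1/2"]) (auto simp: inner_commute norm_mult)
  moreover have "A \<noteq> A*\<omega>"
    using A mult_cancel_left1[of A \<omega>] by (auto simp: \<omega>_def complex_eq_iff cmod_def)
  ultimately have "Y \<in> eq_vertices A" unfolding eq_vertices_def by auto
  then show False using Y(1) disj by auto
qed

lemma not_collinear_if_Im_ne_0:
  fixes a b c :: complex
  assumes "Im ((b - a) * cnj (c - a)) \<noteq> 0"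
  shows "\<not> collinear {a, b, c}"
proof
  assume "collinear {a, b, c}"
  then obtain u c1 c2 where "b - a = c1 *\<^sub>R u" "c - a = c2 *\<^sub>R u"
    unfolding collinear_def by (metis insertI1 insertI2)
  then have "Im ((b - a) * cnj (c - a)) = 0" by (simp add: algebra_simps)
  with assms show False by simp
qed

lemma equilateral_on_unit_circle_real:
  fixes x y p q :: real
  assumes "x^2+y^2 = 1" "p^2+q^2 = 1" "(x-1)^2+y^2 = (p-x)^2+(q-y)^2" "(p-x)^2+(q-y)^2 = (1-p)^2+q^2"
    "\<not>(x=1 \<and> y=0)"
  shows "x = -1/2 \<and> p = -1/2 \<and> ((y = sqrt 3/2 \<and> q = -sqrt 3/2) \<or> (y = -sqrt 3/2 \<and> q = sqrt 3/2))"
proof -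
  have xp: "x = p" using assms(1-4) by (simp add: power2_eq_square algebra_simps)
  have "y^2 = q^2" using assms(1,2) xp by simp
  then have "q = y \<or> q = -y" by (metis power2_eq_iff)
  moreover have "q \<noteq> y"
  proof
    assume "q = y"
    then have "x = 1" using assms(1,3) xp by (simp add: power2_eq_square algebra_simps)
    then show False using assms(1,5) by simp
  qed
  ultimately have qy: "q = -y" by simp
  have "4*y^2 = 2 - 2*x" using assms(1,3) xp qy by (simp add: power2_eq_square algebra_simps)
  then have "(2*x+1)*(x-1) = 0" using assms(1) by (simp add: algebra_simps power2_eq_square)
  moreover have "x \<noteq> 1" using assms(1,5) by auto
  ultimately have x: "x = -1/2" by auto
  then have "y^2 = (sqrt 3/2)^2" using assms(1) by (simp add: power_divide)
  then have "y = sqrt 3/2 \<or> y = -(sqrt 3/2)" by (metis power2_eq_iff)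
  then show ?thesis using x xp qy by auto
qed

lemma equilateral_on_unit_circle:
  fixes a b c :: complex
  assumes "norm a = 1" "norm b = 1" "norm c = 1" "a \<noteq> b"
    "dist a b = dist b c" "dist b c = dist c a"
  shows "{a, b, c} = eq_vertices a"
proof -
  have aa: "cnj a * a = 1" using assms(1)
    by (simp add: complex_eq_iff cmod_def power2_eq_square algebra_simps)
  define u v where "u = b * cnj a" "v = c * cnj a"
  have bu: "b = u * a" "c = v * a" using aa unfolding u_v_def by (simp_all add: mult.assoc)
  have nu: "norm u = 1" "norm v = 1" using assms unfolding u_v_def by (simp_all add: norm_mult)
  have rotate: "norm (x - y) = norm (x * a - y * a)" for x y
    using assms(1) by (simp add: norm_mult flip: left_diff_distrib)
  have d: "norm (u - 1) = norm (v - u)" "norm (v - u) = norm (1 - v)"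
    using assms(5,6) rotate[of u 1] rotate[of v u] rotate[of 1 v]
    by (simp_all add: bu dist_norm norm_minus_commute)
  have sq: "(norm z)^2 = (Re z)^2 + (Im z)^2" for z by (simp add: cmod_power2)
  have "u \<noteq> 1" using bu assms(4) by auto
  then have "Re u = -1/2 \<and> Re v = -1/2 \<and> ((Im u = sqrt 3/2 \<and> Im v = -sqrt 3/2) \<or> (Im u = -sqrt 3/2 \<and> Im v = sqrt 3/2))"
    using unit_Re_Im[OF nu(1)] unit_Re_Im[OF nu(2)] arg_cong[OF d(1), of "\<lambda>t. t^2"] arg_cong[OF d(2), of "\<lambda>t. t^2"]
    by (intro equilateral_on_unit_circle_real) (simp_all add: sq complex_eq_iff)
  then have "(u = \<omega> \<and> v = \<omega>\<^sub>2) \<or> (u = \<omega>\<^sub>2 \<and> v = \<omega>)" by (auto simp: \<omega>_def \<omega>\<^sub>2_def complex_eq_iff)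
  then show ?thesis using bu by (auto simp: mult.commute eq_vertices_def)
qed

lemma EE_imp_eq_triangle:
  assumes "T \<in> EE"
  shows "\<exists>A. norm A = 1 \<and> T = eq_triangle A"
proof -
  obtain a b c where abc: "a \<in> frontier CC" "b \<in> frontier CC" "c \<in> frontier CC" "a \<noteq> b"
    "dist a b = dist b c" "dist b c = dist c a" "T = convex hull {a, b, c}"
    using assms unfolding EE_def by blast
  have CC: "CC = cball 0 1"
    by (auto simp: CC_def disk_def cmod_def)
  have "frontier CC = sphere 0 1"
    unfolding CC by simp
  then have "norm a = 1" "norm b = 1" "norm c = 1" using abc(1-3) by auto
  with equilateral_on_unit_circle abc(4-7) show ?thesis
    unfolding eq_triangle_def by metis
qed

definition on_edge_line :: "complex \<Rightarrow> complex \<Rightarrow> bool" where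
  "on_edge_line z A \<longleftrightarrow> (\<exists>V\<in>eq_vertices A. bary z V = 0)"

lemma bary_pos_if_not_on_edge_line:
  assumes "norm A = 1" "z \<in> eq_triangle A" "\<not> on_edge_line z A" "V \<in> eq_vertices A"
  shows "0 < bary z V"
  using assms mem_eq_triangle_iff[OF assms(1)] unfolding on_edge_line_def eq_vertices_def
  by (metis insert_iff less_eq_real_def singletonD)

lemma card_on_edge_line_le_2:
  assumes "finite I" and norm_A: "\<forall>i\<in>I. norm (A i) = 1"
    and disj: "\<forall>i\<in>I. \<forall>j\<in>I. eq_vertices (A i) \<inter> eq_vertices (A j) \<noteq> {} \<longrightarrow> i = j"
  shows "card {i\<in>I. on_edge_line z (A i)} \<le> 2"
proof (rule ccontr)
  assume "\<not> ?thesis"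
  then obtain J where J: "J \<subseteq> {i\<in>I. on_edge_line z (A i)}" "card J = 3"
    using obtain_subset_with_card_n[of 3] by (metis not_less_eq_eq numeral_3_eq_3 numeral_2_eq_2)
  then obtain i j k where ijk: "i \<in> I" "j \<in> I" "k \<in> I" "i \<noteq> j" "i \<noteq> k" "j \<noteq> k"
    "on_edge_line z (A i)" "on_edge_line z (A j)" "on_edge_line z (A k)"
    unfolding card_3_iff by blast
  then obtain Vi Vj Vk where V: "Vi \<in> eq_vertices (A i)" "Vj \<in> eq_vertices (A j)" "Vk \<in> eq_vertices (A k)"
    "z \<bullet> Vi = -1/2" "z \<bullet> Vj = -1/2" "z \<bullet> Vk = -1/2"
    unfolding on_edge_line_def bary_eq_0_iff by metis
  have "Vi = Vj \<or> Vi = Vk \<or> Vj = Vk"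
    using V norm_A ijk norm_eq_vertices by (intro three_unit_vectors_same_inner[of z]) auto
  then show False using disj ijk V by blast
qed

lemma pigeonhole_few_incidences:
  fixes P :: "'a \<Rightarrow> nat \<Rightarrow> bool"
  assumes "finite S" "card S < n" "\<forall>s\<in>S. card {i\<in>{1..n}. P s i} \<le> 2"
  shows "\<exists>i\<in>{1..n}. card {s\<in>S. P s i} \<le> 1"
proof (rule ccontr)
  assume "\<not> ?thesis"
  then have "(\<Sum>i\<in>{1..n}. (2::nat)) \<le> (\<Sum>i\<in>{1..n}. card {s\<in>S. P s i})"
    by (intro sum_mono) (auto simp: not_le Suc_le_eq numeral_2_eq_2)
  also have "\<dots> = (\<Sum>i\<in>{1..n}. \<Sum>s\<in>S. of_bool (P s i))"
    using assms(1) by (simp add: Int_def)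
  also have "\<dots> = (\<Sum>s\<in>S. card {i\<in>{1..n}. P s i})"
    by (subst sum.swap) (simp add: Int_def)
  also have "\<dots> \<le> (\<Sum>s\<in>S. 2)" using assms(3) by (intro sum_mono) auto
  finally show False using assms(2) by simp
qed

lemma exists_rotation_bary_pos:
  assumes A: "norm A = 1" and "finite S" and S: "S \<subseteq> eq_triangle A" "S \<inter> eq_vertices A = {}"
    and few: "card {z\<in>S. on_edge_line z A} \<le> 1"
  obtains A0 where "norm A0 = 1" "eq_vertices A0 = eq_vertices A"
    "\<forall>z\<in>S. 0 < bary z A0 \<and> 0 < bary z (A0*\<omega>) \<and> 0 \<le> bary z (A0*\<omega>\<^sub>2)"
proof -
  have pos: "0 < bary z A0 \<and> 0 < bary z (A0*\<omega>) \<and> 0 < bary z (A0*\<omega>\<^sub>2)"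
    if "norm A0 = 1" "eq_vertices A0 = eq_vertices A" "z \<in> S" "\<not> on_edge_line z A" for A0 z
  proof -
    have "z \<in> eq_triangle A0" "\<not> on_edge_line z A0"
      using that S by (auto simp: eq_triangle_def on_edge_line_def)
    then show ?thesis
      using bary_pos_if_not_on_edge_line[OF that(1)] by (simp add: eq_vertices_def)
  qed
  have "\<forall>z1\<in>S. \<forall>z2\<in>S. on_edge_line z1 A \<longrightarrow> on_edge_line z2 A \<longrightarrow> z1 = z2"
    using few card_le_Suc0_iff_eq[of "{z\<in>S. on_edge_line z A}"] \<open>finite S\<close> by auto
  then consider "\<forall>z\<in>S. \<not> on_edge_line z A"
    | s0 where "s0 \<in> S" "on_edge_line s0 A" "\<forall>z\<in>S. z \<noteq> s0 \<longrightarrow> \<not> on_edge_line z A"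
    by blast
  then show thesis
  proof cases
    case 1
    then show thesis using that[of A] pos[of A] A by fastforce
  next
    case 2
    then obtain V where V: "V \<in> eq_vertices A" "bary s0 V = 0"
      unfolding on_edge_line_def by blast
    define A0 where "A0 = V * \<omega>"
    have A0: "norm A0 = 1" "eq_vertices A0 = eq_vertices A" "A0 * \<omega>\<^sub>2 = V"
      using norm_eq_vertices[OF A V(1)] eq_vertices_eq_if_mem[OF V(1)]
      by (simp_all add: A0_def norm_mult eq_vertices_mult_\<omega> mult.assoc \<omega>_mult_\<omega>\<^sub>2)
    have "s0 \<in> eq_triangle A0" "s0 \<notin> eq_vertices A0"
      using 2 S A0(2) by (auto simp: eq_triangle_def)
    then have "0 < bary s0 A0" "0 < bary s0 (A0*\<omega>)" "0 \<le> bary s0 (A0*\<omega>\<^sub>2)"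
      using bary_pos_if_not_vertex[OF A0(1)] A0(3) V(2) by auto
    then show thesis
      using that[OF A0(1,2)] pos[OF A0(1,2)] 2 by (metis less_eq_real_def)
  qed
qed

lemma bary_unit_bounds:
  assumes "norm X = 1" "norm V = 1"
  shows "-1/3 \<le> bary X V" "bary X V \<le> 1"
  using Cauchy_Schwarz_ineq2[of X V] assms by (auto simp: bary_def)

lemma bary_affine: "bary ((1-\<tau>) *\<^sub>R B + \<tau> *\<^sub>R X) V = (1-\<tau>) * bary B V + \<tau> * bary X V"
  unfolding bary_def inner_add_left inner_scaleR_left by (simp add: field_simps)

lemma tilted_decomposition:
  fixes z :: complex
  assumes A: "norm A = 1" and d: "d = 1 - \<tau> + \<tau> * bary X (A*\<omega>)" "d \<noteq> 0"
  defines "\<beta> \<equiv> bary z (A*\<omega>) / d"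
  defines "\<alpha> \<equiv> bary z A - \<beta> * \<tau> * bary X A"
  defines "\<gamma> \<equiv> bary z (A*\<omega>\<^sub>2) - \<beta> * \<tau> * bary X (A*\<omega>\<^sub>2)"
  shows "z = \<alpha> *\<^sub>R A + \<beta> *\<^sub>R ((1 - \<tau>) *\<^sub>R (A*\<omega>) + \<tau> *\<^sub>R X) + \<gamma> *\<^sub>R (A*\<omega>\<^sub>2)"
    "\<alpha> + \<beta> + \<gamma> = 1"
proof -
  define xA xB xC where "xA = bary X A" "xB = bary X (A*\<omega>)" "xC = bary X (A*\<omega>\<^sub>2)"
  define zA zB zC where "zA = bary z A" "zB = bary z (A*\<omega>)" "zC = bary z (A*\<omega>\<^sub>2)"
  have X: "X = xA *\<^sub>R A + xB *\<^sub>R (A*\<omega>) + xC *\<^sub>R (A*\<omega>\<^sub>2)" "xA + xB + xC = 1"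
    using bary_decomposition[OF A] bary_sum unfolding xA_xB_xC_def by simp_all
  have z: "z = zA *\<^sub>R A + zB *\<^sub>R (A*\<omega>) + zC *\<^sub>R (A*\<omega>\<^sub>2)" "zA + zB + zC = 1"
    using bary_decomposition[OF A] bary_sum unfolding zA_zB_zC_def by simp_all
  have coeffs: "zB = \<beta> * (1 - \<tau> + \<tau> * xB)" "\<alpha> = zA - \<beta> * \<tau> * xA" "\<gamma> = zC - \<beta> * \<tau> * xC"
    using d unfolding \<alpha>_def \<beta>_def \<gamma>_def xA_xB_xC_def zA_zB_zC_def by simp_all
  show "z = \<alpha> *\<^sub>R A + \<beta> *\<^sub>R ((1 - \<tau>) *\<^sub>R (A*\<omega>) + \<tau> *\<^sub>R X) + \<gamma> *\<^sub>R (A*\<omega>\<^sub>2)"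
    unfolding coeffs(2,3) z(1) coeffs(1) by (subst X(1)) (simp add: algebra_simps)
  show "\<alpha> + \<beta> + \<gamma> = 1"
    using z(2) X(2) unfolding coeffs by algebra
qed

text \<open>Replacing the vertex \<open>A\<omega>\<close> by a point slightly moved towards a vertex \<open>X\<close> beyond the edge
  line opposite \<open>A\<omega>\<^sub>2\<close> pushes the open edge \<open>]A, A\<omega>[\<close> into the interior.\<close>

lemma tilted_triangle:
  assumes A: "norm A = 1" and X: "norm X = 1" "bary X (A*\<omega>\<^sub>2) < 0" and \<tau>: "0 < \<tau>" "\<tau> \<le> 1/2"
  defines "K \<equiv> convex hull {A, (1 - \<tau>) *\<^sub>R (A*\<omega>) + \<tau> *\<^sub>R X, A*\<omega>\<^sub>2}"
  shows "is_triangle K"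
    and "\<And>z. 4 * \<tau> \<le> bary z A \<Longrightarrow> 0 < bary z (A*\<omega>) \<Longrightarrow> 0 \<le> bary z (A*\<omega>\<^sub>2) \<Longrightarrow> z \<in> interior K"
proof -
  define q where "q = (1 - \<tau>) *\<^sub>R (A*\<omega>) + \<tau> *\<^sub>R X"
  define d where "d = 1 - \<tau> + \<tau> * bary X (A*\<omega>)"
  have "-1/3 \<le> bary X (A*\<omega>)" using bary_unit_bounds(1)[OF X(1)] A by (simp add: norm_mult)
  then have "\<tau> * (-1/3) \<le> \<tau> * bary X (A*\<omega>)" using \<tau>(1) by (intro mult_left_mono) auto
  then have d_ge: "1/3 \<le> d" unfolding d_def using \<tau>(2) by linarith
  have "bary q (A*\<omega>) = d"
    unfolding q_def d_def bary_affine using inner_eq_vertices(5)[OF A] by (simp add: bary_def)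
  then have "Im ((q - A) * cnj (A*\<omega>\<^sub>2 - A)) \<noteq> 0"
    using Im_edge_product[OF A] d_ge by simp
  then have noncol: "\<not> collinear {A, q, A*\<omega>\<^sub>2}" by (rule not_collinear_if_Im_ne_0)
  then show "is_triangle K" unfolding is_triangle_def K_def q_def by blast
  fix z assume z: "4 * \<tau> \<le> bary z A" "0 < bary z (A*\<omega>)" "0 \<le> bary z (A*\<omega>\<^sub>2)"
  define \<beta> where "\<beta> = bary z (A*\<omega>) / d"
  define \<alpha> where "\<alpha> = bary z A - \<beta> * \<tau> * bary X A"
  define \<gamma> where "\<gamma> = bary z (A*\<omega>\<^sub>2) - \<beta> * \<tau> * bary X (A*\<omega>\<^sub>2)"
  have \<beta>: "0 < \<beta>" "\<beta> \<le> 3"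
    using z(2) d_ge bary_sum[of z A] z(1,3) \<tau>(1) unfolding \<beta>_def by (auto simp: field_simps)
  have "\<beta> * \<tau> * bary X A \<le> \<beta> * \<tau>"
    using \<beta>(1) \<tau>(1) bary_unit_bounds(2)[OF X(1) A] by (simp add: mult_left_le)
  also have "\<dots> \<le> 3 * \<tau>"
    using \<beta>(2) \<tau>(1) by (simp add: mult_right_mono)
  finally have "0 < \<alpha>" unfolding \<alpha>_def using z(1) \<tau>(1) by linarith
  moreover have "\<beta> * \<tau> * bary X (A*\<omega>\<^sub>2) < 0"
    using \<beta>(1) \<tau>(1) X(2) by (simp add: mult_pos_neg)
  then have "0 < \<gamma>" unfolding \<gamma>_def using z(3) by linarith
  moreover note tilted_decomposition[OF A d_def, of z] d_ge
  ultimately show "z \<in> interior K"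
    unfolding K_def interior_convex_hull_3_minimal[OF noncol[unfolded q_def] DIM_complex]
    using \<beta>(1) by (fastforce simp: \<alpha>_def \<beta>_def \<gamma>_def)
qed

lemma exists_triangle_around:
  assumes "2 \<le> n" and norm_A: "\<forall>k\<in>{1..n}. norm (A k) = 1"
    and disj: "\<forall>i\<in>{1..n}. \<forall>j\<in>{1..n}. eq_vertices (A i) \<inter> eq_vertices (A j) \<noteq> {} \<longrightarrow> i = j"
    and S: "finite S" "S \<subseteq> (\<Inter>k\<in>{1..n}. eq_triangle (A k))" "card S < n"
  obtains K where "is_triangle K" "K \<subseteq> convex hull (\<Union>k\<in>{1..n}. eq_triangle (A k))" "S \<subseteq> interior K"
proof -
  obtain i where i: "i \<in> {1..n}" "card {z\<in>S. on_edge_line z (A i)} \<le> 1"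
    using pigeonhole_few_incidences[OF S(1,3), of "\<lambda>z k. on_edge_line z (A k)"]
      card_on_edge_line_le_2[OF _ norm_A disj] by auto
  obtain j where j: "j \<in> {1..n}" "j \<noteq> i"
  proof (cases "i = 1")
    case True
    then show thesis using that[of 2] \<open>2 \<le> n\<close> by auto
  next
    case False
    then show thesis using that[of 1] i(1) by auto
  qed
  have Ai: "norm (A i) = 1" and Aj: "norm (A j) = 1" using norm_A i(1) j(1) by auto
  have disj_ij: "eq_vertices (A i) \<inter> eq_vertices (A j) = {}" using disj i(1) j by blast
  have "S \<inter> eq_vertices (A i) = {}"
    using unit_mem_eq_triangle_imp_vertex[OF Aj] norm_eq_vertices[OF Ai] disj_ij S(2) j(1) by blast
  then obtain A0 where A0: "norm A0 = 1" "eq_vertices A0 = eq_vertices (A i)"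
    and bary_S: "\<forall>z\<in>S. 0 < bary z A0 \<and> 0 < bary z (A0*\<omega>) \<and> 0 \<le> bary z (A0*\<omega>\<^sub>2)"
    using exists_rotation_bary_pos[OF Ai S(1) _ _ i(2)] S(2) i(1) by blast
  obtain X where X: "X \<in> eq_vertices (A j)" "bary X (A0*\<omega>\<^sub>2) < 0"
    using exists_vertex_beyond_edge[OF A0(1) Aj] disj_ij A0(2) by auto
  \<comment> \<open>inserting \<open>2\<close> keeps the minimum meaningful when \<open>S = {}\<close>\<close>
  define \<tau> where "\<tau> = Min (insert 2 ((\<lambda>z. bary z A0) ` S)) / 4"
  have \<tau>: "0 < \<tau>" "\<tau> \<le> 1/2" "\<forall>z\<in>S. 4 * \<tau> \<le> bary z A0"
    using bary_S S(1) by (auto simp: \<tau>_def)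
  define K where "K = convex hull {A0, (1 - \<tau>) *\<^sub>R (A0*\<omega>) + \<tau> *\<^sub>R X, A0*\<omega>\<^sub>2}"
  note tilted = tilted_triangle[OF A0(1) norm_eq_vertices[OF Aj X(1)] X(2) \<tau>(1,2)]
  let ?Q = "convex hull (\<Union>k\<in>{1..n}. eq_triangle (A k))"
  have vertex_in_Q: "V \<in> ?Q" if "V \<in> eq_vertices (A k)" "k \<in> {1..n}" for V k
    using that by (auto intro!: hull_inc simp: eq_triangle_def)
  moreover have "{A0, A0*\<omega>, A0*\<omega>\<^sub>2} = eq_vertices (A i)"
    using A0(2) by (simp only: eq_vertices_def[of A0])
  ultimately have "A0 \<in> ?Q" "A0*\<omega> \<in> ?Q" "A0*\<omega>\<^sub>2 \<in> ?Q" "X \<in> ?Q"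
    using i(1) j(1) X(1) by blast+
  then have "K \<subseteq> ?Q"
    unfolding K_def using \<tau>(1,2) by (intro hull_minimal) (auto intro: convexD convex_convex_hull)
  then show thesis
    using that[of K] tilted bary_S \<tau>(3) unfolding K_def by blast
qed

lemma shrink_eq_scaleR: "shrink \<epsilon> T = (\<lambda>z. sqrt (1 - \<epsilon>) *\<^sub>R z) ` T"
  unfolding shrink_def by (simp add: scaleR_conv_of_real)

lemma convex_hull_Union_vertices:
  assumes "\<And>i. i \<in> I \<Longrightarrow> compact (K i) \<and> convex (K i)"
  shows "convex hull (\<Union>i\<in>I. vertices (K i)) = convex hull (\<Union>i\<in>I. K i)"
proof
  show "convex hull (\<Union>i\<in>I. vertices (K i)) \<subseteq> convex hull (\<Union>i\<in>I. K i)"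
    by (intro hull_mono) (auto simp: vertices_def extreme_point_of_def)
  have "K i \<subseteq> convex hull (\<Union>i\<in>I. vertices (K i))" if "i \<in> I" for i
  proof -
    have "K i = convex hull (vertices (K i))"
      using assms[OF that] Krein_Milman_Minkowski unfolding vertices_def by blast
    also have "\<dots> \<subseteq> convex hull (\<Union>i\<in>I. vertices (K i))"
      using that by (intro hull_mono) auto
    finally show ?thesis .
  qed
  then show "convex hull (\<Union>i\<in>I. K i) \<subseteq> convex hull (\<Union>i\<in>I. vertices (K i))"
    by (intro hull_minimal) auto
qed

lemma is_triangle_scaleR:
  assumes "is_triangle K" "r \<noteq> 0"
  shows "is_triangle ((\<lambda>z. r *\<^sub>R z) ` K)"
proof -
  obtain a b c where abc: "\<not> collinear {a, b, c}" "K = convex hull {a, b, c}"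
    using assms(1) unfolding is_triangle_def by blast
  have "\<not> collinear {r *\<^sub>R a, r *\<^sub>R b, r *\<^sub>R c}"
    using abc(1) assms(2) collinear_scaleR_iff[where \<alpha>=r and \<beta>=r and w="a - b" and z="c - b"]
    by (simp add: collinear_3[of "r *\<^sub>R a"] collinear_3[of a] algebra_simps flip: scaleR_diff_right)
  then show ?thesis
    unfolding is_triangle_def abc(2) convex_hull_scaling[symmetric] by auto
qed

lemma eventually_ipp_yes_shrink:
  assumes "is_triangle K" "K \<subseteq> Q" "finite S" "S \<subseteq> interior K"
  shows "\<forall>\<^sub>F \<epsilon> in at_right 0. ipp_yes (shrink \<epsilon> Q) S"
proof -
  have "((\<lambda>\<epsilon>. sqrt (1 - \<epsilon>)) \<longlongrightarrow> sqrt (1 - 0)) (at_right (0::real))"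
    by (intro tendsto_intros)
  then have lim: "((\<lambda>\<epsilon>. sqrt (1 - \<epsilon>)) \<longlongrightarrow> 1) (at_right (0::real))" by simp
  have "\<forall>\<^sub>F \<epsilon> in at_right 0. (1 / sqrt (1 - \<epsilon>)) *\<^sub>R z \<in> interior K" if "z \<in> S" for z
  proof -
    have "((\<lambda>\<epsilon>. (1 / sqrt (1 - \<epsilon>)) *\<^sub>R z) \<longlongrightarrow> (1 / 1) *\<^sub>R z) (at_right 0)"
      by (intro tendsto_intros lim) simp
    then have "((\<lambda>\<epsilon>. (1 / sqrt (1 - \<epsilon>)) *\<^sub>R z) \<longlongrightarrow> z) (at_right 0)"
      by simp
    then show ?thesis
      by (rule topological_tendstoD[OF _ open_interior]) (use that assms(4) in blast)
  qed
  then have "\<forall>\<^sub>F \<epsilon> in at_right 0. \<forall>z\<in>S. (1 / sqrt (1 - \<epsilon>)) *\<^sub>R z \<in> interior K"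
    by (rule eventually_ball_finite[OF assms(3), rule_format])
  moreover have "\<forall>\<^sub>F \<epsilon> in at_right 0. 0 < sqrt (1 - \<epsilon>)"
    using order_tendstoD(1)[OF lim, of 0] by simp
  ultimately show ?thesis
  proof eventually_elim
    case (elim \<epsilon>)
    let ?scale = "\<lambda>z. sqrt (1 - \<epsilon>) *\<^sub>R z"
    have "z \<in> ?scale ` K" if "z \<in> S" for z
      using elim that interior_subset by (intro image_eqI[of _ _ "(1 / sqrt (1 - \<epsilon>)) *\<^sub>R z"]) auto
    moreover have "?scale ` K \<subseteq> shrink \<epsilon> Q"
      unfolding shrink_eq_scaleR using assms(2) by blast
    ultimately show ?case
      unfolding ipp_yes_def using is_triangle_scaleR[OF assms(1)] elim(2) by (metis less_irrefl subsetI)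
  qed
qed

lemma shrink_convex_hull_Union_vertices:
  "convex hull (\<Union>i\<in>I. vertices (shrink \<epsilon> (eq_triangle (A i))))
     = shrink \<epsilon> (convex hull (\<Union>i\<in>I. eq_triangle (A i)))"
proof -
  have "compact (shrink \<epsilon> (eq_triangle (A i))) \<and> convex (shrink \<epsilon> (eq_triangle (A i)))" for i
    unfolding shrink_eq_scaleR eq_triangle_def eq_vertices_def
    by (intro conjI compact_scaling convex_scaling compact_convex_hull convex_convex_hull) auto
  then have "convex hull (\<Union>i\<in>I. vertices (shrink \<epsilon> (eq_triangle (A i))))
     = convex hull (\<Union>i\<in>I. shrink \<epsilon> (eq_triangle (A i)))"
    by (intro convex_hull_Union_vertices)
  also have "\<dots> = shrink \<epsilon> (convex hull (\<Union>i\<in>I. eq_triangle (A i)))"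
    unfolding shrink_eq_scaleR image_UN[symmetric] convex_hull_scaling ..
  finally show ?thesis .
qed

lemma eq_vertices_disjoint_if_inj:
  assumes "inj_on (\<lambda>k. eq_triangle (A k)) I"
  shows "\<forall>i\<in>I. \<forall>j\<in>I. eq_vertices (A i) \<inter> eq_vertices (A j) \<noteq> {} \<longrightarrow> i = j"
proof (intro ballI impI)
  fix i j assume ij: "i \<in> I" "j \<in> I" "eq_vertices (A i) \<inter> eq_vertices (A j) \<noteq> {}"
  then obtain V where "V \<in> eq_vertices (A i)" "V \<in> eq_vertices (A j)" by blast
  then have "eq_triangle (A i) = eq_triangle (A j)"
    unfolding eq_triangle_def by (metis eq_vertices_eq_if_common)
  then show "i = j" using assms ij(1,2) by (auto dest: inj_onD)
qed

lemma finite_vertices_Inter_eq_triangle: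
  "finite I \<Longrightarrow> finite (vertices (\<Inter>k\<in>I. eq_triangle (A k)))"
  unfolding vertices_def eq_triangle_def eq_vertices_def
  by (intro finite_polyhedron_extreme_points polyhedron_Inter)
     (auto intro: polytope_imp_polyhedron polytope_convex_hull)

lemma eventually_ipp_yes_eq_triangles:
  assumes "2 \<le> n" and norm_A: "\<forall>k\<in>{1..n}. norm (A k) = 1"
    and inj: "inj_on (\<lambda>k. eq_triangle (A k)) {1..n}"
  shows "\<forall>\<^sub>F \<epsilon> in at_right 0. \<forall>S'. S' \<subseteq> vertices (\<Inter>k\<in>{1..n}. eq_triangle (A k)) \<and> card S' < n
           \<longrightarrow> ipp_yes (shrink \<epsilon> (convex hull (\<Union>k\<in>{1..n}. eq_triangle (A k)))) S'"
proof -
  define F where "F = {S'. S' \<subseteq> vertices (\<Inter>k\<in>{1..n}. eq_triangle (A k)) \<and> card S' < n}"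
  let ?Q = "convex hull (\<Union>k\<in>{1..n}. eq_triangle (A k))"
  have fin: "finite (vertices (\<Inter>k\<in>{1..n}. eq_triangle (A k)))"
    by (rule finite_vertices_Inter_eq_triangle) simp
  have "\<forall>\<^sub>F \<epsilon> in at_right 0. ipp_yes (shrink \<epsilon> ?Q) S'" if "S' \<in> F" for S'
  proof -
    have S': "finite S'" "S' \<subseteq> (\<Inter>k\<in>{1..n}. eq_triangle (A k))" "card S' < n"
      using that fin finite_subset unfolding F_def by (auto simp: vertices_def extreme_point_of_def)
    obtain K where "is_triangle K" "K \<subseteq> ?Q" "S' \<subseteq> interior K"
      using exists_triangle_around[OF assms(1) norm_A eq_vertices_disjoint_if_inj[OF inj] S'] .
    then show ?thesis using eventually_ipp_yes_shrink S'(1) by blast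
  qed
  then have "\<forall>\<^sub>F \<epsilon> in at_right 0. \<forall>S'\<in>F. ipp_yes (shrink \<epsilon> ?Q) S'"
    using fin by (intro eventually_ball_finite) (auto simp: F_def)
  then show ?thesis
    unfolding F_def by simp
qed

theorem mainTheorem14:
  fixes n :: nat and T :: "nat \<Rightarrow> complex set"
  assumes "n \<ge> 2"
    and "\<forall>i\<in>{1..n}. T i \<in> EE"
    and "inj_on T {1..n}"
  shows "\<exists>\<epsilon>0>0. \<forall>\<epsilon>. 0 < \<epsilon> \<and> \<epsilon> < \<epsilon>0 \<longrightarrow>
           (\<forall>S'. S' \<subseteq> vertices (\<Inter>i\<in>{1..n}. T i) \<and> card S' < n \<longrightarrow>
              ipp_yes (convex hull (\<Union>i\<in>{1..n}. vertices (shrink \<epsilon> (T i)))) S')"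
proof -
  have "\<forall>i\<in>{1..n}. \<exists>A. norm A = 1 \<and> T i = eq_triangle A"
    using EE_imp_eq_triangle assms(2) by blast
  from bchoice[OF this] obtain A where A: "\<forall>i\<in>{1..n}. norm (A i) = 1 \<and> T i = eq_triangle (A i)"
    by blast
  have T_Inter: "(\<Inter>i\<in>{1..n}. T i) = (\<Inter>i\<in>{1..n}. eq_triangle (A i))"
    using A by (intro INF_cong) auto
  have T_hull: "convex hull (\<Union>i\<in>{1..n}. vertices (shrink \<epsilon> (T i)))
      = shrink \<epsilon> (convex hull (\<Union>i\<in>{1..n}. eq_triangle (A i)))" for \<epsilon>
    unfolding shrink_convex_hull_Union_vertices[symmetric] using A
    by (intro arg_cong[where f="\<lambda>X. convex hull X"] SUP_cong) auto
  have "inj_on (\<lambda>k. eq_triangle (A k)) {1..n}"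
    using A by (intro iffD1[OF inj_on_cong assms(3)]) auto
  then have "\<forall>\<^sub>F \<epsilon> in at_right 0. \<forall>S'. S' \<subseteq> vertices (\<Inter>i\<in>{1..n}. T i) \<and> card S' < n
      \<longrightarrow> ipp_yes (convex hull (\<Union>i\<in>{1..n}. vertices (shrink \<epsilon> (T i)))) S'"
    unfolding T_Inter T_hull using eventually_ipp_yes_eq_triangles assms(1) A by blast
  then show ?thesis
    unfolding eventually_at_right_field by blast
qed

end
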